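(* Let $\Sigma$ be a finite alphabet, let $n$ be a positive integer and let $\varphi\in\mathrm{FO}^2_n[<]$ be a unique position formula. Then there are $k\in\mathbb{N}$, pairwise mutually exclusive formulas $\alpha_1,\dots,\alpha_k\in\mathrm{FO}^2_n[<]$ and rankers $r_1,\dots,r_k\in R_n^\star$ such that $$\varphi\equiv\bigvee_{i\in[1,k]}\bigl(\alpha_i\wedge\psi_{r_i}\bigr),$$ where for each ranker $r\in R_n^\star$, $\psi_r\in\mathrm{FO}^2_n[<]$ denotes a formula with free variable $x$ such that for all $w\in\Sigma^\star$ and $i\in[1,|w|]$, $(w,i)\models\psi_r$ iff $i=r(w)$.
   Context: Words are finite structures with universe $\{1,\dots,|w|\}$, unary predicates $Q_a$ ($a\in\Sigma$) marking the positions carrying letter $a$, and the order $<$. $\mathrm{FO}^2_n[<]$ is first-order logic over this signature using only the variables $x,y$, with quantifier depth at most $n$. $(w,i)$ denotes $w$ with $x$ interpreted as $i$. A formula $\varphi\in\mathrm{FO}^2[<]$ with free variable $x$ is a unique position formula if for every $w\in\Sigma^\star$ there is at most one $i\in[1,|w|]$ with $(w,i)\models\varphi$. Boundary positions: for $a\in\Sigma$, $\triangleright_a(w)=\min\{i: w_i=a\}$, $\triangleleft_a(w)=\max\{i: w_i=a\}$, $\triangleright_a(w,q)=\min\{i\in[q+1,|w|]:w_i=a\}$, $\triangleleft_a(w,q)=\max\{i\in[1,q-1]:w_i=a\}$ (undefined if empty). An $n$-ranker is a sequence $r=(p_1,\dots,p_n)$ of boundary positions with $r(w)=p_1(w)$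 if $n=1$, undefined if $(p_1,\dots,p_{n-1})(w)$ is undefined, and $p_n(w,(p_1,\dots,p_{n-1})(w))$ otherwise. $R_n^\star$ is the set of all $i$-rankers for $i\in[1,n]$. *)

theory Defs
  imports Main
begin

datatype var = X | Y

datatype 'a fo2 =
    FTrue
  | Less var var
  | Equal var var
  | Letter 'a var
  | Neg "'a fo2"
  | Conj "'a fo2" "'a fo2"
  | Disj "'a fo2" "'a fo2"
  | Exists var "'a fo2"
  | Forall var "'a fo2"

text \<open>Words are lists; positions are 1..length w; letter at position p is w!(p-1).\<close>

fun sat :: "'a list \<Rightarrow> (var \<Rightarrow> nat) \<Rightarrow> 'a fo2 \<Rightarrow> bool" where
  "sat w v FTrue = True"
| "sat w v (Less u u') = (v u < v u')"
| "sat w v (Equal u u') = (v u = v u')"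
| "sat w v (Letter a u) = (1 \<le> v u \<and> v u \<le> length w \<and> w ! (v u - 1) = a)"
| "sat w v (Neg f) = (\<not> sat w v f)"
| "sat w v (Conj f g) = (sat w v f \<and> sat w v g)"
| "sat w v (Disj f g) = (sat w v f \<or> sat w v g)"
| "sat w v (Exists u f) = (\<exists>p\<in>{1..length w}. sat w (v(u := p)) f)"
| "sat w v (Forall u f) = (\<forall>p\<in>{1..length w}. sat w (v(u := p)) f)"

fun fv :: "'a fo2 \<Rightarrow> var set" where
  "fv FTrue = {}"
| "fv (Less u u') = {u, u'}"
| "fv (Equal u u') = {u, u'}"
| "fv (Letter a u) = {u}"
| "fv (Neg f) = fv f"
| "fv (Conj f g) = fv f \<union> fv g"
| "fv (Disj f g) = fv f \<union> fv g"
| "fv (Exists u f) = fv f - {u}"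
| "fv (Forall u f) = fv f - {u}"

fun qdepth :: "'a fo2 \<Rightarrow> nat" where
  "qdepth FTrue = 0"
| "qdepth (Less u u') = 0"
| "qdepth (Equal u u') = 0"
| "qdepth (Letter a u) = 0"
| "qdepth (Neg f) = qdepth f"
| "qdepth (Conj f g) = max (qdepth f) (qdepth g)"
| "qdepth (Disj f g) = max (qdepth f) (qdepth g)"
| "qdepth (Exists u f) = Suc (qdepth f)"
| "qdepth (Forall u f) = Suc (qdepth f)"

text \<open>\<open>(w,i) \<Turnstile> \<phi>\<close>: x interpreted as i (y is irrelevant for formulas with free variables in {x}).\<close>
definition satx :: "'a list \<Rightarrow> nat \<Rightarrow> 'a fo2 \<Rightarrow> bool" where
  "satx w i f = sat w (\<lambda>_. i) f"

definition unique_position :: "'a fo2 \<Rightarrow> bool" where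
  "unique_position f \<longleftrightarrow> fv f \<subseteq> {X} \<and>
     (\<forall>w. \<forall>i\<in>{1..length w}. \<forall>j\<in>{1..length w}. satx w i f \<and> satx w j f \<longrightarrow> i = j)"

datatype 'a bpos = First 'a | Last 'a

definition opt_min :: "nat set \<Rightarrow> nat option" where
  "opt_min S = (if S = {} then None else Some (Min S))"
definition opt_max :: "nat set \<Rightarrow> nat option" where
  "opt_max S = (if S = {} then None else Some (Max S))"

fun bpos_init :: "'a list \<Rightarrow> 'a bpos \<Rightarrow> nat option" where
  "bpos_init w (First a) = opt_min {i\<in>{1..length w}. w ! (i - 1) = a}"
| "bpos_init w (Last a) = opt_max {i\<in>{1..length w}. w ! (i - 1) = a}"

fun bpos_step :: "'a list \<Rightarrow> 'a bpos \<Rightarrow> nat \<Rightarrow> nat option" where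
  "bpos_step w (First a) q = opt_min {i\<in>{q+1..length w}. w ! (i - 1) = a}"
| "bpos_step w (Last a) q = opt_max {i\<in>{1..q-1}. w ! (i - 1) = a}"

fun ranker_from :: "'a list \<Rightarrow> nat \<Rightarrow> 'a bpos list \<Rightarrow> nat option" where
  "ranker_from w q [] = Some q"
| "ranker_from w q (p # ps) = Option.bind (bpos_step w p q) (\<lambda>q'. ranker_from w q' ps)"

fun ranker_eval :: "'a list \<Rightarrow> 'a bpos list \<Rightarrow> nat option" where
  "ranker_eval w [] = None"
| "ranker_eval w (p # ps) = Option.bind (bpos_init w p) (\<lambda>q. ranker_from w q ps)"

definition rankers_upto :: "nat \<Rightarrow> 'a bpos list set" where
  "rankers_upto n = {r. 1 \<le> length r \<and> length r \<le> n}"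

end

theory Submission
  imports Defs
begin

text \<open>If a position \<open>p\<close> of \<open>w\<close> is not the value of any ranker in \<open>R\<^sub>n\<^sup>\<star>\<close>, doubling the letter
  at \<open>p\<close> moves every such ranker value along with it, and both copies of \<open>p\<close> lie in the same gap
  between ranker values as \<open>p\<close> did. Two words whose \<open>R\<^sub>n\<^sup>\<star>\<close>-values are defined and ordered alike
  cannot be told apart by \<open>FO\<^sup>2\<^sub>n[<]\<close> at two positions carrying the same letter and lying in
  corresponding gaps: in the two-pebble game, a pebble placed inside a gap is answered via the
  position reached from the gap's boundary by one more step of a ranker. Hence a unique position
  formula of depth \<open>n\<close> only holds at values of rankers in \<open>R\<^sub>n\<^sup>\<star>\<close>. Each such ranker \<open>r\<close> is
  defined by an \<open>FO\<^sup>2\<^sub>n[<]\<close> formula; enumerating \<open>R\<^sub>n\<^sup>\<star>\<close> as \<open>r\<^sub>1, \<dots>, r\<^sub>k\<close> with defining formulas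
  \<open>\<psi>\<^sub>1, \<dots>, \<psi>\<^sub>k\<close>, the formulas \<open>\<alpha>\<^sub>i = \<phi> \<and> \<psi>\<^sub>i \<and> \<not> \<psi>\<^sub>1 \<and> \<dots> \<and> \<not> \<psi>\<^bsub>i-1\<^esub>\<close> give the decomposition.\<close>

section \<open>Order types and the two-variable game\<close>

definition same_order :: "nat \<Rightarrow> nat \<Rightarrow> nat \<Rightarrow> nat \<Rightarrow> bool" where
  "same_order i j i' j' \<longleftrightarrow> (i < j \<longleftrightarrow> i' < j') \<and> (i = j \<longleftrightarrow> i' = j')"

lemma same_order_refl [simp]: "same_order i i i' i'"
  by (simp add: same_order_def)

lemma same_order_self [simp]: "same_order i j i j"
  by (simp add: same_order_def)

lemma same_order_commute: "same_order i j i' j' \<Longrightarrow> same_order j i j' i'"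
  unfolding same_order_def by auto

lemma same_order_sym: "same_order i j i' j' \<Longrightarrow> same_order i' j' i j"
  unfolding same_order_def by auto

lemma same_order_trans: "same_order i j i' j' \<Longrightarrow> same_order i' j' i'' j'' \<Longrightarrow> same_order i j i'' j''"
  unfolding same_order_def by auto

fun other :: "var \<Rightarrow> var" where
  "other X = Y"
| "other Y = X"

lemma other_neq [simp]: "other u \<noteq> u" "u \<noteq> other u"
  by (cases u; simp)+

lemma var_cases_other: "z = u \<or> z = other u"
  by (cases z; cases u) simp_all

fun fo2_game :: "nat \<Rightarrow> 'a list \<Rightarrow> nat \<Rightarrow> 'a list \<Rightarrow> nat \<Rightarrow> bool" where
  "fo2_game 0 w i w' i' \<longleftrightarrow> i \<in> {1..length w} \<and> i' \<in> {1..length w'} \<and> w ! (i - 1) = w' ! (i' - 1)"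
| "fo2_game (Suc m) w i w' i' \<longleftrightarrow> fo2_game 0 w i w' i' \<and>
     (\<forall>j\<in>{1..length w}. \<exists>j'\<in>{1..length w'}. same_order i j i' j' \<and> fo2_game m w j w' j') \<and>
     (\<forall>j'\<in>{1..length w'}. \<exists>j\<in>{1..length w}. same_order i j i' j' \<and> fo2_game m w j w' j')"

lemma fo2_game_0D: "fo2_game m w i w' i' \<Longrightarrow> fo2_game 0 w i w' i'"
  by (cases m) simp_all

lemma fo2_game_SucD: "fo2_game (Suc m) w i w' i' \<Longrightarrow> fo2_game m w i w' i'"
proof (induction m arbitrary: i i')
  case (Suc m)
  have forward: "\<forall>j\<in>{1..length w}. \<exists>j'\<in>{1..length w'}. same_order i j i' j' \<and> fo2_game m w j w' j'"
  proof
    fix j assume "j \<in> {1..length w}"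
    with Suc.prems obtain j' where "j' \<in> {1..length w'}" "same_order i j i' j'" "fo2_game (Suc m) w j w' j'"
      by (simp only: fo2_game.simps(2)) blast
    with Suc.IH show "\<exists>j'\<in>{1..length w'}. same_order i j i' j' \<and> fo2_game m w j w' j'" by blast
  qed
  have backward: "\<forall>j'\<in>{1..length w'}. \<exists>j\<in>{1..length w}. same_order i j i' j' \<and> fo2_game m w j w' j'"
  proof
    fix j' assume "j' \<in> {1..length w'}"
    with Suc.prems obtain j where "j \<in> {1..length w}" "same_order i j i' j'" "fo2_game (Suc m) w j w' j'"
      by (simp only: fo2_game.simps(2)) blast
    with Suc.IH show "\<exists>j\<in>{1..length w}. same_order i j i' j' \<and> fo2_game m w j w' j'" by blast
  qed
  from Suc.prems forward backward show ?case by (simp only: fo2_game.simps(2))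
qed simp

declare fo2_game.simps(2) [simp del]

lemma sat_quantifier_eq:
  assumes forward: "\<forall>p\<in>{1..length w}. \<exists>p'\<in>{1..length w'}. R p p'"
    and backward: "\<forall>p'\<in>{1..length w'}. \<exists>p\<in>{1..length w}. R p p'"
    and matching: "\<And>p p'. R p p' \<Longrightarrow> sat w (v(u := p)) f = sat w' (v'(u := p')) f"
  shows "sat w v (Exists u f) = sat w' v' (Exists u f)"
    and "sat w v (Forall u f) = sat w' v' (Forall u f)"
proof -
  show "sat w v (Exists u f) = sat w' v' (Exists u f)"
  proof
    assume "sat w v (Exists u f)"
    then obtain p where p: "p \<in> {1..length w}" "sat w (v(u := p)) f" by auto
    with forward obtain p' where "p' \<in> {1..length w'}" "R p p'" by blast
    with p matching show "sat w' v' (Exists u f)" by (metis sat.simps(8))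
  next
    assume "sat w' v' (Exists u f)"
    then obtain p' where p': "p' \<in> {1..length w'}" "sat w' (v'(u := p')) f" by auto
    with backward obtain p where "p \<in> {1..length w}" "R p p'" by blast
    with p' matching show "sat w v (Exists u f)" by (metis sat.simps(8))
  qed
  show "sat w v (Forall u f) = sat w' v' (Forall u f)"
  proof
    assume all: "sat w v (Forall u f)"
    show "sat w' v' (Forall u f)"
      unfolding sat.simps
    proof
      fix p' assume "p' \<in> {1..length w'}"
      with backward obtain p where p: "p \<in> {1..length w}" "R p p'" by blast
      with all have "sat w (v(u := p)) f" by simp
      with p matching show "sat w' (v'(u := p')) f" by blast
    qed
  next
    assume all: "sat w' v' (Forall u f)"
    show "sat w v (Forall u f)"
      unfolding sat.simps
    proof
      fix p assume "p \<in> {1..length w}"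
      with forward obtain p' where p': "p' \<in> {1..length w'}" "R p p'" by blast
      with all have "sat w' (v'(u := p')) f" by simp
      with p' matching show "sat w (v(u := p)) f" by blast
    qed
  qed
qed

lemma fo2_game_quantifier_step:
  assumes IH: "\<And>v v'. \<forall>z. fo2_game m w (v z) w' (v' z) \<Longrightarrow>
      \<forall>z z'. same_order (v z) (v z') (v' z) (v' z') \<Longrightarrow> sat w v f = sat w' v' f"
    and game: "\<forall>z. fo2_game (Suc m) w (v z) w' (v' z)"
    and order: "\<forall>z z'. same_order (v z) (v z') (v' z) (v' z')"
  shows "sat w v (Exists u f) = sat w' v' (Exists u f)"
    and "sat w v (Forall u f) = sat w' v' (Forall u f)"
proof -
  define R where "R p p' \<longleftrightarrow> same_order (v (other u)) p (v' (other u)) p' \<and> fo2_game m w p w' p'"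
    for p p'
  have game_other: "fo2_game (Suc m) w (v (other u)) w' (v' (other u))"
    using game by blast
  have forward: "\<forall>p\<in>{1..length w}. \<exists>p'\<in>{1..length w'}. R p p'"
    and backward: "\<forall>p'\<in>{1..length w'}. \<exists>p\<in>{1..length w}. R p p'"
    using game_other unfolding R_def fo2_game.simps(2) by blast+
  have matching: "sat w (v(u := p)) f = sat w' (v'(u := p')) f" if "R p p'" for p p'
  proof (rule IH)
    show "\<forall>z. fo2_game m w ((v(u := p)) z) w' ((v'(u := p')) z)"
      using that game fo2_game_SucD var_cases_other unfolding R_def by fastforce
    show "\<forall>z z'. same_order ((v(u := p)) z) ((v(u := p)) z') ((v'(u := p')) z) ((v'(u := p')) z')"
    proof (intro allI)
      fix z z'
      show "same_order ((v(u := p)) z) ((v(u := p)) z') ((v'(u := p')) z) ((v'(u := p')) z')"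
        using var_cases_other[of z u] var_cases_other[of z' u] that order
        unfolding R_def by (auto intro: same_order_commute)
    qed
  qed
  show "sat w v (Exists u f) = sat w' v' (Exists u f)"
    using forward backward matching by (rule sat_quantifier_eq)
  show "sat w v (Forall u f) = sat w' v' (Forall u f)"
    using forward backward matching by (rule sat_quantifier_eq)
qed

lemma fo2_game_sat_eq:
  assumes "qdepth f \<le> m"
    and "\<forall>z. fo2_game m w (v z) w' (v' z)"
    and "\<forall>z z'. same_order (v z) (v z') (v' z) (v' z')"
  shows "sat w v f = sat w' v' f"
  using assms
proof (induction f arbitrary: m v v')
  case (Less u u')
  then show ?case by (simp add: same_order_def)
next
  case (Equal u u')
  then show ?case by (simp add: same_order_def)
next
  case (Letter a u)
  then show ?case using fo2_game_0D[of m w "v u" w' "v' u"] by simp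
next
  case (Neg f)
  then show ?case by simp
next
  case (Conj f g)
  then show ?case using Conj.IH[of m v v'] by simp
next
  case (Disj f g)
  then show ?case using Disj.IH[of m v v'] by simp
next
  case (Exists u f)
  then obtain m0 where m: "m = Suc m0" and "qdepth f \<le> m0" by (cases m) simp_all
  from Exists.prems(2,3) show ?case
    unfolding m by (rule fo2_game_quantifier_step(1)[rotated]) (fact Exists.IH[OF \<open>qdepth f \<le> m0\<close>])
next
  case (Forall u f)
  then obtain m0 where m: "m = Suc m0" and "qdepth f \<le> m0" by (cases m) simp_all
  from Forall.prems(2,3) show ?case
    unfolding m by (rule fo2_game_quantifier_step(2)[rotated]) (fact Forall.IH[OF \<open>qdepth f \<le> m0\<close>])
qed simp

lemma fo2_game_satx_eq: "fo2_game m w i w' i' \<Longrightarrow> qdepth f \<le> m \<Longrightarrow> satx w i f = satx w' i' f"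
  unfolding satx_def by (rule fo2_game_sat_eq) simp_all

lemma opt_min_Some_iff: "finite S \<Longrightarrow> opt_min S = Some t \<longleftrightarrow> t \<in> S \<and> (\<forall>s\<in>S. t \<le> s)"
  unfolding opt_min_def by (auto intro: Min_eqI Min_in)

lemma opt_max_Some_iff: "finite S \<Longrightarrow> opt_max S = Some t \<longleftrightarrow> t \<in> S \<and> (\<forall>s\<in>S. s \<le> t)"
  unfolding opt_max_def by (auto intro: Max_eqI Max_in)

lemma opt_min_Some_eq_iff: "finite S \<Longrightarrow> opt_min S = Some x \<longleftrightarrow> x \<in> S \<and> \<not> (\<exists>p\<in>S. p < x)"
  by (auto simp: opt_min_Some_iff not_less)

lemma opt_max_Some_eq_iff: "finite S \<Longrightarrow> opt_max S = Some x \<longleftrightarrow> x \<in> S \<and> \<not> (\<exists>p\<in>S. x < p)"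
  by (auto simp: opt_max_Some_iff not_less)

lemma opt_min_Some_less_iff: "finite S \<Longrightarrow> (\<exists>t. opt_min S = Some t \<and> t < x) \<longleftrightarrow> (\<exists>p\<in>S. p < x)"
  by (auto simp: opt_min_def Min_less_iff)

lemma opt_min_Some_greater_iff:
  "finite S \<Longrightarrow> (\<exists>t. opt_min S = Some t \<and> x < t) \<longleftrightarrow> (\<exists>p\<in>S. x < p) \<and> \<not> (\<exists>p\<in>S. p < x \<or> p = x)"
  by (auto simp: opt_min_def)

lemma opt_max_Some_greater_iff: "finite S \<Longrightarrow> (\<exists>t. opt_max S = Some t \<and> x < t) \<longleftrightarrow> (\<exists>p\<in>S. x < p)"
  by (auto simp: opt_max_def Max_gr_iff)

lemma opt_max_Some_less_iff:
  "finite S \<Longrightarrow> (\<exists>t. opt_max S = Some t \<and> t < x) \<longleftrightarrow> (\<exists>p\<in>S. p < x) \<and> \<not> (\<exists>p\<in>S. x < p \<or> x = p)"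
  by (auto simp: opt_max_def)

lemma opt_min_transfer:
  assumes "finite S" and "finite S'" and "e ` S \<subseteq> S'" and "h ` S' \<subseteq> S"
    and "\<And>t i. opt_min S = Some t \<Longrightarrow> i \<in> S' \<Longrightarrow> t \<le> h i \<Longrightarrow> e t \<le> i"
  shows "opt_min S' = map_option e (opt_min S)"
proof (cases "S = {}")
  case False
  then have "opt_min S = Some (Min S)" by (simp add: opt_min_def)
  moreover have "opt_min S' = Some (e (Min S))"
    using assms calculation by (auto simp: opt_min_Some_iff intro: Min_in)
  ultimately show ?thesis by simp
qed (use assms in \<open>auto simp: opt_min_def\<close>)

lemma opt_max_transfer:
  assumes "finite S" and "finite S'" and "e ` S \<subseteq> S'" and "h ` S' \<subseteq> S"
    and "\<And>t i. opt_max S = Some t \<Longrightarrow> i \<in> S' \<Longrightarrow> h i \<le> t \<Longrightarrow> i \<le> e t"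
  shows "opt_max S' = map_option e (opt_max S)"
proof (cases "S = {}")
  case False
  then have "opt_max S = Some (Max S)" by (simp add: opt_max_def)
  moreover have "opt_max S' = Some (e (Max S))"
    using assms calculation by (auto simp: opt_max_Some_iff intro: Max_in)
  ultimately show ?thesis by simp
qed (use assms in \<open>auto simp: opt_max_def\<close>)

fun letter_of :: "'a bpos \<Rightarrow> 'a" where
  "letter_of (First a) = a"
| "letter_of (Last a) = a"

lemma bpos_step_in_range:
  assumes "q \<le> Suc (length w)" and "bpos_step w b q = Some t"
  shows "t \<in> {1..length w} \<and> w ! (t - 1) = letter_of b"
proof (cases b)
  case (First a)
  with assms(2) have "t \<in> {i\<in>{q+1..length w}. w ! (i - 1) = a}"
    by (simp add: opt_min_Some_iff)
  with First show ?thesis by auto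
next
  case (Last a)
  with assms(2) have "t \<in> {i\<in>{1..q-1}. w ! (i - 1) = a}"
    by (simp add: opt_max_Some_iff)
  with Last assms(1) show ?thesis by auto
qed

lemma ranker_from_in_range:
  "q \<le> Suc (length w) \<Longrightarrow> ranker_from w q rs = Some t \<Longrightarrow> rs \<noteq> [] \<Longrightarrow>
   t \<in> {1..length w} \<and> w ! (t - 1) = letter_of (last rs)"
proof (induction rs arbitrary: q)
  case (Cons b rs)
  then obtain q1 where q1: "bpos_step w b q = Some q1" "ranker_from w q1 rs = Some t"
    by (auto split: Option.bind_splits)
  have "q1 \<in> {1..length w} \<and> w ! (q1 - 1) = letter_of b"
    using bpos_step_in_range[OF Cons.prems(1) q1(1)] .
  with q1 Cons.IH[of q1] show ?case by (cases rs) auto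
qed simp

definition start_pos :: "'a list \<Rightarrow> 'a bpos \<Rightarrow> nat" where
  "start_pos w b = (case b of First _ \<Rightarrow> 0 | Last _ \<Rightarrow> Suc (length w))"

lemma start_pos_le: "start_pos w b \<le> Suc (length w)"
  by (cases b) (simp_all add: start_pos_def)

lemma bpos_init_eq_step: "bpos_init w b = bpos_step w b (start_pos w b)"
  by (cases b) (simp_all add: start_pos_def)

lemma ranker_eval_Cons: "ranker_eval w (b # rs) = ranker_from w (start_pos w b) (b # rs)"
  by (simp add: bpos_init_eq_step)

lemma ranker_eval_in_range:
  assumes "ranker_eval w r = Some t"
  shows "t \<in> {1..length w} \<and> w ! (t - 1) = letter_of (last r)"
proof (cases r)
  case (Cons b rs)
  with assms show ?thesis
    using ranker_from_in_range[OF start_pos_le] by (simp only: ranker_eval_Cons) blast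
qed (use assms in simp)

lemma ranker_from_snoc:
  "ranker_from w q (rs @ [b]) = Option.bind (ranker_from w q rs) (bpos_step w b)"
  by (induction rs arbitrary: q) (auto split: Option.bind_splits)

lemma ranker_eval_snoc:
  "r \<noteq> [] \<Longrightarrow> ranker_eval w (r @ [b]) = Option.bind (ranker_eval w r) (bpos_step w b)"
  by (cases r) (simp_all add: ranker_eval_Cons ranker_from_snoc del: ranker_from.simps(2))

lemma rankers_upto_mono: "m \<le> m' \<Longrightarrow> rankers_upto m \<subseteq> rankers_upto m'"
  unfolding rankers_upto_def by auto

lemma rankers_upto_subset_Suc: "rankers_upto m \<subseteq> rankers_upto (Suc m)"
  by (simp add: rankers_upto_mono)

lemma rankers_upto_snoc: "r \<in> rankers_upto m \<Longrightarrow> r @ [b] \<in> rankers_upto (Suc m)"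
  unfolding rankers_upto_def by simp

lemma singleton_in_rankers_upto: "[b] \<in> rankers_upto (Suc m)"
  unfolding rankers_upto_def by simp

instance bpos :: (finite) finite
proof
  have "b \<in> range First \<union> range Last" for b :: "'a bpos"
    by (cases b) auto
  then have "(UNIV :: 'a bpos set) = range First \<union> range Last"
    by blast
  then show "finite (UNIV :: 'a bpos set)"
    by (metis finite_Un finite_imageI finite_UNIV)
qed

lemma finite_rankers_upto: "finite (rankers_upto n :: 'a::finite bpos list set)"
  by (rule finite_subset[OF _ finite_lists_length_le[OF finite_UNIV, of n]]) (auto simp: rankers_upto_def)

lemma finite_ranker_values: "finite {t. \<exists>r\<in>R. ranker_eval w r = Some t \<and> P t}"
  by (rule finite_subset[of _ "{1..length w}"]) (auto dest: ranker_eval_in_range)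

lemma ranker_step_exists:
  assumes "u = start_pos w b \<or> (\<exists>r\<in>rankers_upto m. ranker_eval w r = Some u)"
  shows "\<exists>r\<in>rankers_upto (Suc m). last r = b \<and> ranker_eval w r = bpos_step w b u"
  using assms
proof
  assume "u = start_pos w b"
  then show ?thesis
    using singleton_in_rankers_upto[of b m] by (intro bexI[of _ "[b]"]) (simp_all add: bpos_init_eq_step)
next
  assume "\<exists>r\<in>rankers_upto m. ranker_eval w r = Some u"
  then obtain r where "r \<in> rankers_upto m" "ranker_eval w r = Some u" by blast
  moreover from this have "r \<noteq> []" by (auto simp: rankers_upto_def)
  ultimately show ?thesis
    using rankers_upto_snoc by (force simp: ranker_eval_snoc)
qed

lemma Last_ranker_above:
  assumes j: "j \<in> {1..length w}"
  obtains r z where "r \<in> rankers_upto (Suc m)" "ranker_eval w r = Some z"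
    "last r = Last (w ! (j - 1))" "j \<le> z"
    "\<And>r' t. r' \<in> rankers_upto m \<Longrightarrow> ranker_eval w r' = Some t \<Longrightarrow> j < t \<Longrightarrow> z < t"
proof -
  define H where "H = {t. \<exists>r\<in>rankers_upto m. ranker_eval w r = Some t \<and> j < t}"
  define u where "u = (if H = {} then Suc (length w) else Min H)"
  define T where "T = {i\<in>{1..u-1}. w ! (i - 1) = w ! (j - 1)}"
  have "finite H"
    unfolding H_def by (rule finite_ranker_values)
  have u: "u = start_pos w (Last (w ! (j - 1))) \<or> (\<exists>r\<in>rankers_upto m. ranker_eval w r = Some u)"
    using Min_in[OF \<open>finite H\<close>] unfolding u_def H_def by (auto simp: start_pos_def)
  have "j < u"
    using j Min_in[OF \<open>finite H\<close>] unfolding u_def H_def by auto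
  with j have "j \<in> T" and "finite T"
    unfolding T_def by auto
  then have step: "bpos_step w (Last (w ! (j - 1))) u = Some (Max T)"
    unfolding T_def by (auto simp: opt_max_def)
  have "\<forall>i\<in>T. i < u" using \<open>j < u\<close> unfolding T_def by auto
  then have "Max T < u" using Max_in[OF \<open>finite T\<close>] \<open>j \<in> T\<close> by blast
  obtain r where r: "r \<in> rankers_upto (Suc m)" "last r = Last (w ! (j - 1))"
    "ranker_eval w r = bpos_step w (Last (w ! (j - 1))) u"
    using ranker_step_exists[OF u] by blast
  show thesis
  proof (rule that[OF r(1) _ r(2)])
    show "ranker_eval w r = Some (Max T)" using r(3) step by simp
    show "j \<le> Max T" using \<open>finite T\<close> \<open>j \<in> T\<close> by simp
    fix r' t assume "r' \<in> rankers_upto m" "ranker_eval w r' = Some t" "j < t"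
    then have "t \<in> H" unfolding H_def by blast
    then have "u \<le> t" using \<open>finite H\<close> unfolding u_def by auto
    with \<open>Max T < u\<close> show "Max T < t" by simp
  qed
qed

lemma First_ranker_below:
  assumes j: "j \<in> {1..length w}"
  obtains r z where "r \<in> rankers_upto (Suc m)" "ranker_eval w r = Some z"
    "last r = First (w ! (j - 1))" "z \<le> j"
    "\<And>r' t. r' \<in> rankers_upto m \<Longrightarrow> ranker_eval w r' = Some t \<Longrightarrow> t < j \<Longrightarrow> t < z"
proof -
  define H where "H = {t. \<exists>r\<in>rankers_upto m. ranker_eval w r = Some t \<and> t < j}"
  define u where "u = (if H = {} then 0 else Max H)"
  define T where "T = {i\<in>{u+1..length w}. w ! (i - 1) = w ! (j - 1)}"
  have "finite H"
    unfolding H_def by (rule finite_ranker_values)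
  have u: "u = start_pos w (First (w ! (j - 1))) \<or> (\<exists>r\<in>rankers_upto m. ranker_eval w r = Some u)"
    using Max_in[OF \<open>finite H\<close>] unfolding u_def H_def by (auto simp: start_pos_def)
  have "u < j"
    using j Max_in[OF \<open>finite H\<close>] unfolding u_def H_def by auto
  with j have "j \<in> T" and "finite T"
    unfolding T_def by auto
  then have step: "bpos_step w (First (w ! (j - 1))) u = Some (Min T)"
    unfolding T_def by (auto simp: opt_min_def)
  have "\<forall>i\<in>T. u < i" unfolding T_def by auto
  then have "u < Min T" using Min_in[OF \<open>finite T\<close>] \<open>j \<in> T\<close> by blast
  obtain r where r: "r \<in> rankers_upto (Suc m)" "last r = First (w ! (j - 1))"
    "ranker_eval w r = bpos_step w (First (w ! (j - 1))) u"
    using ranker_step_exists[OF u] by blast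
  show thesis
  proof (rule that[OF r(1) _ r(2)])
    show "ranker_eval w r = Some (Min T)" using r(3) step by simp
    show "Min T \<le> j" using \<open>finite T\<close> \<open>j \<in> T\<close> by simp
    fix r' t assume "r' \<in> rankers_upto m" "ranker_eval w r' = Some t" "t < j"
    then have "t \<in> H" unfolding H_def by blast
    then have "t \<le> u" using \<open>finite H\<close> unfolding u_def by auto
    with \<open>u < Min T\<close> show "t < Min T" by simp
  qed
qed

section \<open>Ranker equivalence implies FO2 equivalence\<close>

definition ranker_equiv :: "nat \<Rightarrow> 'a list \<Rightarrow> 'a list \<Rightarrow> bool" where
  "ranker_equiv m w w' \<longleftrightarrow>
     (\<forall>r\<in>rankers_upto m. ranker_eval w r = None \<longleftrightarrow> ranker_eval w' r = None) \<and>
     (\<forall>r1\<in>rankers_upto m. \<forall>r2\<in>rankers_upto m. \<forall>t1 t2 t1' t2'.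
        ranker_eval w r1 = Some t1 \<longrightarrow> ranker_eval w r2 = Some t2 \<longrightarrow>
        ranker_eval w' r1 = Some t1' \<longrightarrow> ranker_eval w' r2 = Some t2' \<longrightarrow> same_order t1 t2 t1' t2')"

definition ranker_equiv_at :: "nat \<Rightarrow> 'a list \<Rightarrow> nat \<Rightarrow> 'a list \<Rightarrow> nat \<Rightarrow> bool" where
  "ranker_equiv_at m w x w' x' \<longleftrightarrow> fo2_game 0 w x w' x' \<and> ranker_equiv m w w' \<and>
     (\<forall>r\<in>rankers_upto m. \<forall>t t'. ranker_eval w r = Some t \<longrightarrow> ranker_eval w' r = Some t' \<longrightarrow>
        same_order t x t' x')"

lemma ranker_equiv_defined:
  "ranker_equiv m w w' \<Longrightarrow> r \<in> rankers_upto m \<Longrightarrow> ranker_eval w r = Some t \<Longrightarrow>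
   \<exists>t'. ranker_eval w' r = Some t'"
  unfolding ranker_equiv_def by (metis option.exhaust option.simps(3))

lemma ranker_equiv_same_order:
  "ranker_equiv m w w' \<Longrightarrow> r1 \<in> rankers_upto m \<Longrightarrow> r2 \<in> rankers_upto m \<Longrightarrow>
   ranker_eval w r1 = Some t1 \<Longrightarrow> ranker_eval w r2 = Some t2 \<Longrightarrow>
   ranker_eval w' r1 = Some t1' \<Longrightarrow> ranker_eval w' r2 = Some t2' \<Longrightarrow> same_order t1 t2 t1' t2'"
  unfolding ranker_equiv_def by blast

lemma ranker_equiv_at_same_order:
  "ranker_equiv_at m w x w' x' \<Longrightarrow> r \<in> rankers_upto m \<Longrightarrow>
   ranker_eval w r = Some t \<Longrightarrow> ranker_eval w' r = Some t' \<Longrightarrow> same_order t x t' x'"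
  unfolding ranker_equiv_at_def by blast

lemma ranker_equiv_mono: "ranker_equiv m' w w' \<Longrightarrow> m \<le> m' \<Longrightarrow> ranker_equiv m w w'"
  unfolding ranker_equiv_def using rankers_upto_mono by blast

lemma ranker_equiv_at_mono: "ranker_equiv_at m' w x w' x' \<Longrightarrow> m \<le> m' \<Longrightarrow> ranker_equiv_at m w x w' x'"
  unfolding ranker_equiv_at_def using rankers_upto_mono ranker_equiv_mono by blast

lemma ranker_equiv_sym: "ranker_equiv m w w' \<Longrightarrow> ranker_equiv m w' w"
  unfolding ranker_equiv_def by (meson same_order_sym)

lemma ranker_equiv_at_sym: "ranker_equiv_at m w x w' x' \<Longrightarrow> ranker_equiv_at m w' x' w x"
  unfolding ranker_equiv_at_def using ranker_equiv_sym by (metis fo2_game.simps(1) same_order_sym)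

text \<open>Duplicator answers a pebble \<open>j\<close> with the image of a ranker value \<open>z\<close> of the next length
  that no shorter ranker value separates from \<open>j\<close>.\<close>

lemma ranker_equiv_at_response:
  assumes equiv: "ranker_equiv_at (Suc m) w x w' x'"
    and rz: "rz \<in> rankers_upto (Suc m)" "ranker_eval w rz = Some z"
    and j: "j \<in> {1..length w}" "w ! (j - 1) = letter_of (last rz)"
    and side: "same_order x j x z"
    and between: "\<And>r t. r \<in> rankers_upto m \<Longrightarrow> ranker_eval w r = Some t \<Longrightarrow> same_order t j t z"
  shows "\<exists>j'\<in>{1..length w'}. same_order x j x' j' \<and> ranker_equiv_at m w j w' j'"
proof -
  have words: "ranker_equiv (Suc m) w w'"
    using equiv unfolding ranker_equiv_at_def by blast
  then obtain z' where z': "ranker_eval w' rz = Some z'"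
    using rz ranker_equiv_defined by blast
  have z'_range: "z' \<in> {1..length w'}" "w' ! (z' - 1) = w ! (j - 1)"
    using ranker_eval_in_range[OF z'] j(2) by auto
  have "same_order x j x' z'"
    using same_order_trans[OF side same_order_commute[OF ranker_equiv_at_same_order[OF equiv rz z']]] .
  moreover have "ranker_equiv_at m w j w' z'"
    unfolding ranker_equiv_at_def
  proof (intro conjI ballI allI impI)
    show "fo2_game 0 w j w' z'"
      using j z'_range by simp
    show "ranker_equiv m w w'"
      using ranker_equiv_mono[OF words] by simp
    fix r t t' assume r: "r \<in> rankers_upto m" "ranker_eval w r = Some t" "ranker_eval w' r = Some t'"
    have "r \<in> rankers_upto (Suc m)"
      using r(1) rankers_upto_subset_Suc by blast
    then have "same_order t z t' z'"
      using ranker_equiv_same_order[OF words _ rz(1) r(2) rz(2) r(3) z'] by blast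
    with between[OF r(1,2)] show "same_order t j t' z'"
      by (rule same_order_trans)
  qed
  ultimately show ?thesis
    using z'_range by blast
qed

lemma ranker_equiv_at_forth:
  assumes equiv: "ranker_equiv_at (Suc m) w x w' x'" and j: "j \<in> {1..length w}"
  shows "\<exists>j'\<in>{1..length w'}. same_order x j x' j' \<and> ranker_equiv_at m w j w' j'"
proof -
  consider (ranker) r where "r \<in> rankers_upto m" "ranker_eval w r = Some j"
    | (here) "j = x"
    | (right) "x < j" "\<forall>r\<in>rankers_upto m. ranker_eval w r \<noteq> Some j"
    | (left) "j < x" "\<forall>r\<in>rankers_upto m. ranker_eval w r \<noteq> Some j"
    by (metis linorder_neqE_nat)
  then show ?thesis
  proof cases
    case ranker
    show ?thesis
    proof (rule ranker_equiv_at_response[OF equiv _ ranker(2) j])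
      show "r \<in> rankers_upto (Suc m)" using ranker(1) rankers_upto_subset_Suc by blast
      show "w ! (j - 1) = letter_of (last r)" using ranker_eval_in_range[OF ranker(2)] by blast
    qed simp_all
  next
    case here
    have "x' \<in> {1..length w'}" using equiv unfolding ranker_equiv_at_def by simp
    moreover have "ranker_equiv_at m w x w' x'" using ranker_equiv_at_mono[OF equiv] by simp
    ultimately show ?thesis using here same_order_refl by blast
  next
    case right
    obtain r z where r: "r \<in> rankers_upto (Suc m)" "ranker_eval w r = Some z"
      "last r = Last (w ! (j - 1))" "j \<le> z"
      and above: "\<And>r' t. r' \<in> rankers_upto m \<Longrightarrow> ranker_eval w r' = Some t \<Longrightarrow> j < t \<Longrightarrow> z < t"
      using Last_ranker_above[OF j] by blast
    show ?thesis
    proof (rule ranker_equiv_at_response[OF equiv r(1,2) j])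
      show "w ! (j - 1) = letter_of (last r)" using r(3) by simp
      show "same_order x j x z" using right r(4) unfolding same_order_def by simp
      fix r' t assume t: "r' \<in> rankers_upto m" "ranker_eval w r' = Some t"
      then have "t \<noteq> j" using right(2) by blast
      with above[OF t] r(4) show "same_order t j t z" unfolding same_order_def by (cases "j < t") auto
    qed
  next
    case left
    obtain r z where r: "r \<in> rankers_upto (Suc m)" "ranker_eval w r = Some z"
      "last r = First (w ! (j - 1))" "z \<le> j"
      and below: "\<And>r' t. r' \<in> rankers_upto m \<Longrightarrow> ranker_eval w r' = Some t \<Longrightarrow> t < j \<Longrightarrow> t < z"
      using First_ranker_below[OF j] by blast
    show ?thesis
    proof (rule ranker_equiv_at_response[OF equiv r(1,2) j])
      show "w ! (j - 1) = letter_of (last r)" using r(3) by simp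
      show "same_order x j x z" using left r(4) unfolding same_order_def by simp
      fix r' t assume t: "r' \<in> rankers_upto m" "ranker_eval w r' = Some t"
      then have "t \<noteq> j" using left(2) by blast
      with below[OF t] r(4) show "same_order t j t z" unfolding same_order_def by (cases "t < j") auto
    qed
  qed
qed

lemma ranker_equiv_at_imp_fo2_game: "ranker_equiv_at m w x w' x' \<Longrightarrow> fo2_game m w x w' x'"
proof (induction m arbitrary: x x')
  case 0
  then show ?case unfolding ranker_equiv_at_def by simp
next
  case (Suc m)
  have "fo2_game 0 w x w' x'"
    using Suc.prems unfolding ranker_equiv_at_def by blast
  moreover have "\<forall>j\<in>{1..length w}. \<exists>j'\<in>{1..length w'}. same_order x j x' j' \<and> fo2_game m w j w' j'"
    using ranker_equiv_at_forth[OF Suc.prems] Suc.IH by blast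
  moreover have "\<forall>j'\<in>{1..length w'}. \<exists>j\<in>{1..length w}. same_order x j x' j' \<and> fo2_game m w j w' j'"
  proof
    fix j' assume "j' \<in> {1..length w'}"
    then obtain j where "j \<in> {1..length w}" "same_order x' j' x j" "ranker_equiv_at m w' j' w j"
      using ranker_equiv_at_forth[OF ranker_equiv_at_sym[OF Suc.prems]] by blast
    then show "\<exists>j\<in>{1..length w}. same_order x j x' j' \<and> fo2_game m w j w' j'"
      using Suc.IH ranker_equiv_at_sym same_order_sym by blast
  qed
  ultimately show ?case
    by (simp only: fo2_game.simps(2))
qed

section \<open>Unique positions are ranker values\<close>

text \<open>\<open>stutter w p\<close> repeats the letter at position \<open>p\<close>; position \<open>q\<close> of \<open>w\<close> corresponds to
  \<open>stutter_pos p q\<close>, so that \<open>p\<close> itself is sent to the second copy \<open>p + 1\<close>.\<close>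

definition stutter :: "'a list \<Rightarrow> nat \<Rightarrow> 'a list" where
  "stutter w p = take p w @ drop (p - 1) w"

definition stutter_pos :: "nat \<Rightarrow> nat \<Rightarrow> nat" where
  "stutter_pos p q = (if q < p then q else Suc q)"

definition unstutter_pos :: "nat \<Rightarrow> nat \<Rightarrow> nat" where
  "unstutter_pos p i = (if i \<le> p then i else i - 1)"

lemma stutter_pos_le: "t \<noteq> p \<Longrightarrow> t \<le> unstutter_pos p i \<Longrightarrow> stutter_pos p t \<le> i"
  unfolding stutter_pos_def unstutter_pos_def by (auto split: if_splits)

lemma le_stutter_pos: "t \<noteq> p \<Longrightarrow> unstutter_pos p i \<le> t \<Longrightarrow> i \<le> stutter_pos p t"
  unfolding stutter_pos_def unstutter_pos_def by (auto split: if_splits)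

context
  fixes w :: "'a list" and p :: nat
  assumes p: "p \<in> {1..length w}"
begin

lemma length_stutter: "length (stutter w p) = Suc (length w)"
  using p unfolding stutter_def by simp

lemma nth_stutter:
  assumes "i \<in> {1..Suc (length w)}"
  shows "stutter w p ! (i - 1) = w ! (unstutter_pos p i - 1)" and "unstutter_pos p i \<in> {1..length w}"
proof -
  have len: "length (take p w) = p" using p by simp
  show "stutter w p ! (i - 1) = w ! (unstutter_pos p i - 1)"
  proof (cases "i \<le> p")
    case True
    with assms len show ?thesis by (simp add: stutter_def nth_append unstutter_pos_def)
  next
    case False
    with len have "stutter w p ! (i - 1) = drop (p - 1) w ! (i - 1 - p)"
      by (simp add: stutter_def nth_append)
    also have "\<dots> = w ! (p - 1 + (i - 1 - p))"
      by (rule nth_drop) (use p in auto)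
    also have "p - 1 + (i - 1 - p) = unstutter_pos p i - 1"
      using False p by (simp add: unstutter_pos_def)
    finally show ?thesis .
  qed
  show "unstutter_pos p i \<in> {1..length w}"
    using assms p by (auto simp: unstutter_pos_def)
qed

lemma nth_stutter_pos: "q \<in> {1..length w} \<Longrightarrow> stutter w p ! (stutter_pos p q - 1) = w ! (q - 1)"
  using nth_stutter(1)[of "stutter_pos p q"] by (auto simp: stutter_pos_def unstutter_pos_def)

lemma bpos_step_stutter:
  assumes q: "q \<le> Suc (length w)" "q \<noteq> p" and not_p: "bpos_step w b q \<noteq> Some p"
  shows "bpos_step (stutter w p) b (stutter_pos p q) = map_option (stutter_pos p) (bpos_step w b q)"
proof (cases b)
  case (First a)
  let ?S = "{i\<in>{q+1..length w}. w ! (i - 1) = a}"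
  let ?S' = "{i\<in>{stutter_pos p q + 1..length (stutter w p)}. stutter w p ! (i - 1) = a}"
  have "opt_min ?S' = map_option (stutter_pos p) (opt_min ?S)"
  proof (rule opt_min_transfer)
    show "stutter_pos p ` ?S \<subseteq> ?S'"
    proof (rule image_subsetI)
      fix i assume "i \<in> ?S"
      then show "stutter_pos p i \<in> ?S'"
        using nth_stutter_pos[of i] length_stutter by (auto simp: stutter_pos_def)
    qed
    show "unstutter_pos p ` ?S' \<subseteq> ?S"
    proof (rule image_subsetI)
      fix i assume "i \<in> ?S'"
      then show "unstutter_pos p i \<in> ?S"
        using nth_stutter[of i] length_stutter q(2)
        by (auto simp: stutter_pos_def unstutter_pos_def split: if_splits)
    qed
    show "stutter_pos p t \<le> i" if "opt_min ?S = Some t" "i \<in> ?S'" "t \<le> unstutter_pos p i" for t i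
      using stutter_pos_le that(1,3) not_p First by auto
  qed simp_all
  with First show ?thesis by simp
next
  case (Last a)
  let ?S = "{i\<in>{1..q-1}. w ! (i - 1) = a}"
  let ?S' = "{i\<in>{1..stutter_pos p q - 1}. stutter w p ! (i - 1) = a}"
  have "opt_max ?S' = map_option (stutter_pos p) (opt_max ?S)"
  proof (rule opt_max_transfer)
    show "stutter_pos p ` ?S \<subseteq> ?S'"
    proof (rule image_subsetI)
      fix i assume "i \<in> ?S"
      then show "stutter_pos p i \<in> ?S'"
        using nth_stutter_pos[of i] q(1) by (auto simp: stutter_pos_def)
    qed
    show "unstutter_pos p ` ?S' \<subseteq> ?S"
    proof (rule image_subsetI)
      fix i assume "i \<in> ?S'"
      then show "unstutter_pos p i \<in> ?S"
        using nth_stutter[of i] q by (auto simp: stutter_pos_def unstutter_pos_def split: if_splits)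
    qed
    show "i \<le> stutter_pos p t" if "opt_max ?S = Some t" "i \<in> ?S'" "unstutter_pos p i \<le> t" for t i
      using le_stutter_pos that(1,3) not_p Last by auto
  qed simp_all
  with Last show ?thesis by simp
qed

lemma ranker_from_stutter:
  assumes "q \<le> Suc (length w)" and "q \<noteq> p"
    and "\<forall>k\<in>{1..length rs}. ranker_from w q (take k rs) \<noteq> Some p"
  shows "ranker_from (stutter w p) (stutter_pos p q) rs = map_option (stutter_pos p) (ranker_from w q rs)"
  using assms
proof (induction rs arbitrary: q)
  case (Cons b rs)
  have not_p: "bpos_step w b q \<noteq> Some p"
    using Cons.prems(3) by (auto dest: bspec[of _ _ 1])
  show ?case
  proof (cases "bpos_step w b q")
    case None
    then show ?thesis
      using bpos_step_stutter[OF Cons.prems(1,2) not_p] by simp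
  next
    case (Some q1)
    have "q1 \<in> {1..length w}"
      using bpos_step_in_range[OF Cons.prems(1) Some] by blast
    moreover have "q1 \<noteq> p"
      using not_p Some by simp
    moreover have "\<forall>k\<in>{1..length rs}. ranker_from w q1 (take k rs) \<noteq> Some p"
    proof
      fix k assume "k \<in> {1..length rs}"
      then have "ranker_from w q (take (Suc k) (b # rs)) \<noteq> Some p"
        using Cons.prems(3) by (auto dest: bspec[of _ _ "Suc k"])
      with Some show "ranker_from w q1 (take k rs) \<noteq> Some p" by simp
    qed
    ultimately show ?thesis
      using Cons.IH[of q1] bpos_step_stutter[OF Cons.prems(1,2) not_p] Some by simp
  qed
qed simp

lemma ranker_eval_stutter:
  assumes avoid: "\<forall>r\<in>rankers_upto n. ranker_eval w r \<noteq> Some p" and r: "r \<in> rankers_upto n"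
  shows "ranker_eval (stutter w p) r = map_option (stutter_pos p) (ranker_eval w r)"
proof -
  obtain b rs where r_Cons: "r = b # rs"
    using r unfolding rankers_upto_def by (cases r) auto
  have start: "start_pos (stutter w p) b = stutter_pos p (start_pos w b)" "start_pos w b \<noteq> p"
    using p length_stutter unfolding start_pos_def stutter_pos_def by (auto split: bpos.splits)
  have "\<forall>k\<in>{1..length r}. ranker_from w (start_pos w b) (take k r) \<noteq> Some p"
  proof
    fix k assume k: "k \<in> {1..length r}"
    then have "take k r \<in> rankers_upto n"
      using r unfolding rankers_upto_def by auto
    moreover have "take k r = b # take (k - 1) rs"
      using k r_Cons by (cases k) auto
    ultimately show "ranker_from w (start_pos w b) (take k r) \<noteq> Some p"
      using avoid ranker_eval_Cons by metis
  qed
  then have "ranker_from (stutter w p) (stutter_pos p (start_pos w b)) (b # rs) =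
      map_option (stutter_pos p) (ranker_from w (start_pos w b) (b # rs))"
    unfolding r_Cons by (rule ranker_from_stutter[OF start_pos_le start(2)])
  then show ?thesis
    unfolding r_Cons ranker_eval_Cons start(1) .
qed

lemma ranker_equiv_at_stutter:
  assumes avoid: "\<forall>r\<in>rankers_upto n. ranker_eval w r \<noteq> Some p" and x': "x' \<in> {p, Suc p}"
  shows "ranker_equiv_at n w p (stutter w p) x'"
  unfolding ranker_equiv_at_def ranker_equiv_def
proof (intro conjI ballI allI impI)
  show "fo2_game 0 w p (stutter w p) x'"
    using p x' nth_stutter[of x'] length_stutter by (auto simp: unstutter_pos_def)
  fix r :: "'a bpos list" assume r: "r \<in> rankers_upto n"
  show "ranker_eval w r = None \<longleftrightarrow> ranker_eval (stutter w p) r = None"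
    using ranker_eval_stutter[OF avoid r] by simp
  fix t t' assume "ranker_eval w r = Some t" "ranker_eval (stutter w p) r = Some t'"
  then have "t' = stutter_pos p t" "t \<noteq> p"
    using ranker_eval_stutter[OF avoid r] avoid r by auto
  with x' show "same_order t p t' x'"
    unfolding same_order_def stutter_pos_def by auto
next
  fix r1 r2 :: "'a bpos list" and t1 t2 t1' t2'
  assume r: "r1 \<in> rankers_upto n" "r2 \<in> rankers_upto n"
    and "ranker_eval w r1 = Some t1" "ranker_eval w r2 = Some t2"
      "ranker_eval (stutter w p) r1 = Some t1'" "ranker_eval (stutter w p) r2 = Some t2'"
  then have "t1' = stutter_pos p t1" "t2' = stutter_pos p t2"
    using ranker_eval_stutter[OF avoid] by auto
  then show "same_order t1 t2 t1' t2'"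
    unfolding same_order_def stutter_pos_def by auto
qed

end

lemma unique_position_at_ranker:
  assumes "qdepth \<phi> \<le> n" and "unique_position \<phi>" and p: "p \<in> {1..length w}" and "satx w p \<phi>"
  shows "\<exists>r\<in>rankers_upto n. ranker_eval w r = Some p"
proof (rule ccontr)
  assume "\<not> ?thesis"
  then have avoid: "\<forall>r\<in>rankers_upto n. ranker_eval w r \<noteq> Some p" by blast
  have "satx (stutter w p) x' \<phi>" if "x' \<in> {p, Suc p}" for x'
    using ranker_equiv_at_imp_fo2_game[OF ranker_equiv_at_stutter[OF p avoid that]]
      fo2_game_satx_eq assms by blast
  moreover have "p \<in> {1..length (stutter w p)}" "Suc p \<in> {1..length (stutter w p)}"
    using p length_stutter[OF p] by auto
  ultimately show False
    using \<open>unique_position \<phi>\<close> unfolding unique_position_def by (metis insertCI n_not_Suc_n)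
qed

section \<open>Rankers are definable in FO2\<close>

text \<open>The formulas below recurse on the last boundary position of a ranker, so rankers are passed
  reversed; the flag \<open>s\<close> records whether evaluation starts from the virtual position \<open>0\<close>
  (the ranker begins with a \<open>First\<close>) or from \<open>|w| + 1\<close>.\<close>

definition rev_ranker_eval :: "bool \<Rightarrow> 'a bpos list \<Rightarrow> 'a list \<Rightarrow> nat option" where
  "rev_ranker_eval s rr w = ranker_from w (if s then 0 else Suc (length w)) (rev rr)"

lemma rev_ranker_eval_Cons:
  "rev_ranker_eval s (b # rr) w = Option.bind (rev_ranker_eval s rr w) (bpos_step w b)"
  unfolding rev_ranker_eval_def by (simp add: ranker_from_snoc)

lemma rev_ranker_eval_le: "rev_ranker_eval s rr w = Some t \<Longrightarrow> t \<le> Suc (length w)"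
  unfolding rev_ranker_eval_def
  by (cases "rr = []") (auto dest!: ranker_from_in_range[rotated] split: if_splits)

fun ranker_below :: "bool \<Rightarrow> 'a bpos list \<Rightarrow> var \<Rightarrow> 'a fo2"
and ranker_above :: "bool \<Rightarrow> 'a bpos list \<Rightarrow> var \<Rightarrow> 'a fo2" where
  "ranker_below s [] v = (if s then FTrue else Neg FTrue)"
| "ranker_below s (First a # rr) v =
     Exists (other v) (Conj (Less (other v) v) (Conj (Letter a (other v)) (ranker_below s rr (other v))))"
| "ranker_below s (Last a # rr) v =
     Conj (Exists (other v) (Conj (Less (other v) v) (Conj (Letter a (other v)) (ranker_above s rr (other v)))))
       (Neg (Exists (other v) (Conj (Disj (Less v (other v)) (Equal v (other v)))
          (Conj (Letter a (other v)) (ranker_above s rr (other v))))))"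
| "ranker_above s [] v = (if s then Neg FTrue else FTrue)"
| "ranker_above s (Last a # rr) v =
     Exists (other v) (Conj (Less v (other v)) (Conj (Letter a (other v)) (ranker_above s rr (other v))))"
| "ranker_above s (First a # rr) v =
     Conj (Exists (other v) (Conj (Less v (other v)) (Conj (Letter a (other v)) (ranker_below s rr (other v)))))
       (Neg (Exists (other v) (Conj (Disj (Less (other v) v) (Equal (other v) v))
          (Conj (Letter a (other v)) (ranker_below s rr (other v))))))"

fun ranker_at :: "bool \<Rightarrow> 'a bpos list \<Rightarrow> var \<Rightarrow> 'a fo2" where
  "ranker_at s [] v = Neg FTrue"
| "ranker_at s (First a # rr) v =
     Conj (Letter a v) (Conj (ranker_below s rr v) (Neg (ranker_below s (First a # rr) v)))"
| "ranker_at s (Last a # rr) v =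
     Conj (Letter a v) (Conj (ranker_above s rr v) (Neg (ranker_above s (Last a # rr) v)))"

lemma fv_ranker_below_above: "fv (ranker_below s rr v) \<subseteq> {v} \<and> fv (ranker_above s rr v) \<subseteq> {v}"
proof (induction rr arbitrary: v)
  case (Cons b rr)
  then show ?case by (cases b) auto
qed simp

lemma qdepth_ranker_below_above:
  "qdepth (ranker_below s rr v) \<le> length rr \<and> qdepth (ranker_above s rr v) \<le> length rr"
proof (induction rr arbitrary: v)
  case (Cons b rr)
  then show ?case by (cases b) auto
qed simp

lemma fv_ranker_at: "fv (ranker_at s rr v) \<subseteq> {v}"
  using fv_ranker_below_above[of s rr v] fv_ranker_below_above[of s "tl rr" v]
  by (cases "(s, rr, v)" rule: ranker_at.cases) auto

lemma qdepth_ranker_at: "qdepth (ranker_at s rr v) \<le> length rr"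
  using qdepth_ranker_below_above[of s rr v] qdepth_ranker_below_above[of s "tl rr" v]
  by (cases "(s, rr, v)" rule: ranker_at.cases) auto

lemma sat_ranker_below_above:
  "val v \<in> {1..length w} \<Longrightarrow>
   (sat w val (ranker_below s rr v) \<longleftrightarrow> (\<exists>t. rev_ranker_eval s rr w = Some t \<and> t < val v)) \<and>
   (sat w val (ranker_above s rr v) \<longleftrightarrow> (\<exists>t. rev_ranker_eval s rr w = Some t \<and> val v < t))"
proof (induction rr arbitrary: val v)
  case Nil
  then show ?case by (simp add: rev_ranker_eval_def)
next
  case (Cons b rr)
  define u where "u = other v"
  have u: "u \<noteq> v" "v \<noteq> u" unfolding u_def by simp_all
  have below: "sat w (val(u := p)) (ranker_below s rr u) \<longleftrightarrow> (\<exists>t. rev_ranker_eval s rr w = Some t \<and> t < p)"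
    and above: "sat w (val(u := p)) (ranker_above s rr u) \<longleftrightarrow> (\<exists>t. rev_ranker_eval s rr w = Some t \<and> p < t)"
    if "p \<in> {1..length w}" for p
    using Cons.IH[of "val(u := p)" u] that unfolding fun_upd_same by blast+
  show ?case
  proof (cases "rev_ranker_eval s rr w")
    case None
    then show ?thesis
      using below above by (cases b) (auto simp: rev_ranker_eval_Cons u_def[symmetric])
  next
    case (Some t0)
    show ?thesis
    proof (cases b)
      case (First a)
      define S where "S = {i\<in>{t0+1..length w}. w ! (i - 1) = a}"
      have "finite S" unfolding S_def by simp
      have eval: "rev_ranker_eval s (b # rr) w = opt_min S"
        using Some First unfolding S_def by (simp add: rev_ranker_eval_Cons)
      have S_iff: "p \<in> S \<longleftrightarrow> p \<in> {1..length w} \<and> w ! (p - 1) = a \<and> t0 < p" for p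
        unfolding S_def by auto
      have "sat w val (ranker_below s (b # rr) v) \<longleftrightarrow> (\<exists>p\<in>S. p < val v)"
        using below Some u First S_iff by (auto simp: u_def[symmetric])
      moreover have "sat w val (ranker_above s (b # rr) v) \<longleftrightarrow>
          (\<exists>p\<in>S. val v < p) \<and> \<not> (\<exists>p\<in>S. p < val v \<or> p = val v)"
        using below Some u First S_iff by (auto simp: u_def[symmetric])
      ultimately show ?thesis
        unfolding eval using opt_min_Some_less_iff opt_min_Some_greater_iff \<open>finite S\<close> by simp
    next
      case (Last a)
      define S where "S = {i\<in>{1..t0-1}. w ! (i - 1) = a}"
      have "finite S" unfolding S_def by simp
      have eval: "rev_ranker_eval s (b # rr) w = opt_max S"
        using Some Last unfolding S_def by (simp add: rev_ranker_eval_Cons)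
      have "t0 \<le> Suc (length w)"
        using rev_ranker_eval_le[OF Some] .
      then have S_iff: "p \<in> S \<longleftrightarrow> p \<in> {1..length w} \<and> w ! (p - 1) = a \<and> p < t0" for p
        unfolding S_def by auto
      have "sat w val (ranker_above s (b # rr) v) \<longleftrightarrow> (\<exists>p\<in>S. val v < p)"
        using above Some u Last S_iff by (auto simp: u_def[symmetric])
      moreover have "sat w val (ranker_below s (b # rr) v) \<longleftrightarrow>
          (\<exists>p\<in>S. p < val v) \<and> \<not> (\<exists>p\<in>S. val v < p \<or> val v = p)"
        using above Some u Last S_iff by (auto simp: u_def[symmetric])
      ultimately show ?thesis
        unfolding eval using opt_max_Some_less_iff opt_max_Some_greater_iff \<open>finite S\<close> by simp
    qed
  qed
qed

lemma sat_ranker_at: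
  assumes "rr \<noteq> []" and v: "val v \<in> {1..length w}"
  shows "sat w val (ranker_at s rr v) \<longleftrightarrow> rev_ranker_eval s rr w = Some (val v)"
proof -
  obtain b rr0 where rr: "rr = b # rr0" using assms(1) by (cases rr) auto
  note sat_rr0 = sat_ranker_below_above[of val v w s rr0, OF v]
  note sat_rr = sat_ranker_below_above[of val v w s "b # rr0", OF v]
  show ?thesis
  proof (cases "rev_ranker_eval s rr0 w")
    case None
    then show ?thesis using sat_rr0 rr by (cases b) (auto simp: rev_ranker_eval_Cons)
  next
    case (Some t0)
    show ?thesis
    proof (cases b)
      case (First a)
      define S where "S = {i\<in>{t0+1..length w}. w ! (i - 1) = a}"
      have "finite S" unfolding S_def by simp
      have eval: "rev_ranker_eval s rr w = opt_min S"
        using Some First rr unfolding S_def by (simp add: rev_ranker_eval_Cons)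
      have "sat w val (ranker_at s rr v) \<longleftrightarrow> val v \<in> S \<and> \<not> (\<exists>t. opt_min S = Some t \<and> t < val v)"
        using sat_rr0 sat_rr eval Some v rr First unfolding S_def by auto
      also have "\<dots> \<longleftrightarrow> opt_min S = Some (val v)"
        using opt_min_Some_less_iff opt_min_Some_eq_iff \<open>finite S\<close> by simp
      finally show ?thesis unfolding eval .
    next
      case (Last a)
      define S where "S = {i\<in>{1..t0-1}. w ! (i - 1) = a}"
      have "finite S" unfolding S_def by simp
      have eval: "rev_ranker_eval s rr w = opt_max S"
        using Some Last rr unfolding S_def by (simp add: rev_ranker_eval_Cons)
      have "sat w val (ranker_at s rr v) \<longleftrightarrow> val v \<in> S \<and> \<not> (\<exists>t. opt_max S = Some t \<and> val v < t)"
        using sat_rr0 sat_rr eval Some v rr Last unfolding S_def by auto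
      also have "\<dots> \<longleftrightarrow> opt_max S = Some (val v)"
        using opt_max_Some_greater_iff opt_max_Some_eq_iff \<open>finite S\<close> by simp
      finally show ?thesis unfolding eval .
    qed
  qed
qed

definition ranker_formula :: "'a bpos list \<Rightarrow> 'a fo2" where
  "ranker_formula r = ranker_at (case hd r of First _ \<Rightarrow> True | Last _ \<Rightarrow> False) (rev r) X"

lemma satx_ranker_formula:
  assumes "r \<noteq> []" and "p \<in> {1..length w}"
  shows "satx w p (ranker_formula r) \<longleftrightarrow> ranker_eval w r = Some p"
proof -
  obtain b rs where r: "r = b # rs" using assms(1) by (cases r) auto
  have "rev_ranker_eval (case hd r of First _ \<Rightarrow> True | Last _ \<Rightarrow> False) (rev r) w = ranker_eval w r"
    unfolding rev_ranker_eval_def r ranker_eval_Cons by (cases b) (simp_all add: start_pos_def)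
  with assms show ?thesis
    unfolding ranker_formula_def satx_def by (simp add: sat_ranker_at)
qed

lemma fv_ranker_formula: "fv (ranker_formula r) \<subseteq> {X}"
  unfolding ranker_formula_def by (rule fv_ranker_at)

lemma qdepth_ranker_formula: "qdepth (ranker_formula r) \<le> length r"
  unfolding ranker_formula_def using qdepth_ranker_at[of _ "rev r" X] by simp

fun big_disj :: "'a fo2 list \<Rightarrow> 'a fo2" where
  "big_disj [] = Neg FTrue"
| "big_disj (f # fs) = Disj f (big_disj fs)"

lemma sat_big_disj: "sat w val (big_disj fs) \<longleftrightarrow> (\<exists>f\<in>set fs. sat w val f)"
  by (induction fs) auto

lemma fv_big_disj: "\<forall>f\<in>set fs. fv f \<subseteq> A \<Longrightarrow> fv (big_disj fs) \<subseteq> A"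
  by (induction fs) auto

lemma qdepth_big_disj: "\<forall>f\<in>set fs. qdepth f \<le> n \<Longrightarrow> qdepth (big_disj fs) \<le> n"
  by (induction fs) auto

definition first_match :: "'a fo2 \<Rightarrow> 'a fo2 list \<Rightarrow> nat \<Rightarrow> 'a fo2" where
  "first_match \<phi> \<psi>s i = Conj \<phi> (Conj (\<psi>s ! i) (Neg (big_disj (take i \<psi>s))))"

lemma satx_first_match:
  "i < length \<psi>s \<Longrightarrow> satx w p (first_match \<phi> \<psi>s i) \<longleftrightarrow>
     satx w p \<phi> \<and> satx w p (\<psi>s ! i) \<and> (\<forall>j<i. \<not> satx w p (\<psi>s ! j))"
  unfolding first_match_def satx_def by (auto simp: sat_big_disj nth_image[symmetric])

lemma satx_first_matchD: "satx w p (first_match \<phi> \<psi>s i) \<Longrightarrow> satx w p \<phi> \<and> satx w p (\<psi>s ! i)"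
  unfolding first_match_def satx_def by simp

lemma first_match_exclusive:
  "i < length \<psi>s \<Longrightarrow> j < length \<psi>s \<Longrightarrow> i \<noteq> j \<Longrightarrow>
   \<not> (satx w p (first_match \<phi> \<psi>s i) \<and> satx w p (first_match \<phi> \<psi>s j))"
  by (cases "i < j") (auto simp: satx_first_match)

lemma first_match_exists:
  assumes "satx w p \<phi>" and "j < length \<psi>s" and "satx w p (\<psi>s ! j)"
  shows "\<exists>i<length \<psi>s. satx w p (first_match \<phi> \<psi>s i)"
proof -
  obtain i where "i < length \<psi>s \<and> satx w p (\<psi>s ! i)" and "\<forall>i'<i. \<not> (i' < length \<psi>s \<and> satx w p (\<psi>s ! i'))"
    using exists_least_iff[of "\<lambda>i. i < length \<psi>s \<and> satx w p (\<psi>s ! i)"] assms(2,3) by blast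
  with assms(1) show ?thesis
    by (auto simp: satx_first_match)
qed

lemma fv_first_match:
  "fv \<phi> \<subseteq> A \<Longrightarrow> \<forall>\<psi>\<in>set \<psi>s. fv \<psi> \<subseteq> A \<Longrightarrow> i < length \<psi>s \<Longrightarrow> fv (first_match \<phi> \<psi>s i) \<subseteq> A"
  unfolding first_match_def using fv_big_disj[of "take i \<psi>s" A] by (auto dest: in_set_takeD)

lemma qdepth_first_match:
  "qdepth \<phi> \<le> n \<Longrightarrow> \<forall>\<psi>\<in>set \<psi>s. qdepth \<psi> \<le> n \<Longrightarrow> i < length \<psi>s \<Longrightarrow> qdepth (first_match \<phi> \<psi>s i) \<le> n"
  unfolding first_match_def using qdepth_big_disj[of "take i \<psi>s" n] by (auto dest: in_set_takeD)

lemma bex_atLeastAtMost_Suc_iff: "(\<exists>i\<in>{1..k}. P i) \<longleftrightarrow> (\<exists>i<k. P (Suc i))"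
proof
  assume "\<exists>i\<in>{1..k}. P i"
  then obtain i where "i \<in> {1..k}" "P i" by blast
  then show "\<exists>i<k. P (Suc i)" by (intro exI[of _ "i - 1"]) auto
qed auto

context
  fixes rs :: "'a bpos list list" and n :: nat
  assumes rs: "set rs = rankers_upto n"
begin

lemma satx_nth_ranker_formulas:
  assumes "j < length rs" and "p \<in> {1..length w}"
  shows "satx w p (map ranker_formula rs ! j) \<longleftrightarrow> ranker_eval w (rs ! j) = Some p"
proof -
  have "rs ! j \<noteq> []"
    using nth_mem[OF assms(1)] rs unfolding rankers_upto_def by auto
  with assms show ?thesis
    by (simp add: satx_ranker_formula)
qed

lemma first_match_ranker_bounds:
  assumes "qdepth \<phi> \<le> n" and "fv \<phi> \<subseteq> {X}" and "i < length rs"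
  shows "qdepth (first_match \<phi> (map ranker_formula rs) i) \<le> n \<and> fv (first_match \<phi> (map ranker_formula rs) i) \<subseteq> {X}"
proof
  have "\<forall>\<psi>\<in>set (map ranker_formula rs). qdepth \<psi> \<le> n"
    using rs qdepth_ranker_formula unfolding rankers_upto_def by (auto intro: order_trans)
  with assms show "qdepth (first_match \<phi> (map ranker_formula rs) i) \<le> n"
    by (simp add: qdepth_first_match)
  have "\<forall>\<psi>\<in>set (map ranker_formula rs). fv \<psi> \<subseteq> {X}"
    using fv_ranker_formula by auto
  with assms show "fv (first_match \<phi> (map ranker_formula rs) i) \<subseteq> {X}"
    by (simp add: fv_first_match)
qed

lemma satx_iff_first_match_ranker:
  assumes "qdepth \<phi> \<le> n" and "unique_position \<phi>" and p: "p \<in> {1..length w}"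
  shows "satx w p \<phi> \<longleftrightarrow>
    (\<exists>i<length rs. satx w p (first_match \<phi> (map ranker_formula rs) i) \<and> ranker_eval w (rs ! i) = Some p)"
proof
  assume "satx w p \<phi>"
  obtain r where "r \<in> set rs" "ranker_eval w r = Some p"
    using unique_position_at_ranker[OF assms \<open>satx w p \<phi>\<close>] rs by blast
  then obtain j where j: "j < length rs" "ranker_eval w (rs ! j) = Some p"
    by (auto simp: in_set_conv_nth)
  have "satx w p (map ranker_formula rs ! j)"
    using satx_nth_ranker_formulas[OF j(1) p] j(2) by simp
  then have "\<exists>i<length rs. satx w p (first_match \<phi> (map ranker_formula rs) i)"
    using first_match_exists[OF \<open>satx w p \<phi>\<close>, of j "map ranker_formula rs"] j(1) by simp
  then obtain i where i: "i < length rs" "satx w p (first_match \<phi> (map ranker_formula rs) i)"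
    by blast
  moreover have "ranker_eval w (rs ! i) = Some p"
    using satx_first_matchD[OF i(2)] satx_nth_ranker_formulas[OF i(1) p] by simp
  ultimately show "\<exists>i<length rs. satx w p (first_match \<phi> (map ranker_formula rs) i) \<and>
      ranker_eval w (rs ! i) = Some p"
    by blast
next
  assume "\<exists>i<length rs. satx w p (first_match \<phi> (map ranker_formula rs) i) \<and> ranker_eval w (rs ! i) = Some p"
  then show "satx w p \<phi>"
    using satx_first_matchD by blast
qed

end

theorem theorem3p12:
  fixes \<phi> :: "('a::finite) fo2" and n :: nat
  assumes "n \<ge> 1" and "qdepth \<phi> \<le> n" and "unique_position \<phi>"
  shows "\<exists>(k::nat) (\<alpha>::nat \<Rightarrow> 'a fo2) (r::nat \<Rightarrow> 'a bpos list).
     (\<forall>i\<in>{1..k}. qdepth (\<alpha> i) \<le> n \<and> fv (\<alpha> i) \<subseteq> {X} \<and> r i \<in> rankers_upto n) \<and>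
     (\<forall>i\<in>{1..k}. \<forall>j\<in>{1..k}. i \<noteq> j \<longrightarrow>
        (\<forall>w. \<forall>p\<in>{1..length w}. \<not> (satx w p (\<alpha> i) \<and> satx w p (\<alpha> j)))) \<and>
     (\<forall>w. \<forall>p\<in>{1..length w}.
        satx w p \<phi> \<longleftrightarrow> (\<exists>i\<in>{1..k}. satx w p (\<alpha> i) \<and> ranker_eval w (r i) = Some p))"
proof -
  obtain rs where rs: "set rs = (rankers_upto n :: 'a bpos list set)"
    using finite_list[OF finite_rankers_upto] by blast
  define \<alpha> where "\<alpha> i = first_match \<phi> (map ranker_formula rs) (i - 1)" for i
  define r where "r i = rs ! (i - 1)" for i
  have fv: "fv \<phi> \<subseteq> {X}"
    using assms(3) unfolding unique_position_def by blast
  have "\<forall>i\<in>{1..length rs}. qdepth (\<alpha> i) \<le> n \<and> fv (\<alpha> i) \<subseteq> {X} \<and> r i \<in> rankers_upto n"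
  proof
    fix i assume "i \<in> {1..length rs}"
    then have i: "i - 1 < length rs" by auto
    show "qdepth (\<alpha> i) \<le> n \<and> fv (\<alpha> i) \<subseteq> {X} \<and> r i \<in> rankers_upto n"
      unfolding \<alpha>_def r_def using first_match_ranker_bounds[OF rs assms(2) fv i] nth_mem[OF i] rs by simp
  qed
  moreover have "\<forall>i\<in>{1..length rs}. \<forall>j\<in>{1..length rs}. i \<noteq> j \<longrightarrow>
      (\<forall>w. \<forall>p\<in>{1..length w}. \<not> (satx w p (\<alpha> i) \<and> satx w p (\<alpha> j)))"
  proof (intro ballI impI allI)
    fix i j w p assume "i \<in> {1..length rs}" "j \<in> {1..length rs}" "i \<noteq> j"
    then show "\<not> (satx w p (\<alpha> i) \<and> satx w p (\<alpha> j))"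
      unfolding \<alpha>_def using first_match_exclusive[of "i - 1" "map ranker_formula rs" "j - 1"] by auto
  qed
  moreover have "\<forall>w. \<forall>p\<in>{1..length w}.
      satx w p \<phi> \<longleftrightarrow> (\<exists>i\<in>{1..length rs}. satx w p (\<alpha> i) \<and> ranker_eval w (r i) = Some p)"
  proof (intro allI ballI)
    fix w :: "'a list" and p assume "p \<in> {1..length w}"
    then show "satx w p \<phi> \<longleftrightarrow> (\<exists>i\<in>{1..length rs}. satx w p (\<alpha> i) \<and> ranker_eval w (r i) = Some p)"
      unfolding bex_atLeastAtMost_Suc_iff \<alpha>_def r_def using satx_iff_first_match_ranker[OF rs assms(2,3)] by simp
  qed
  ultimately show ?thesis
    by blast
qed

end
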